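(* There exists a sequence $(G_n)_{n\in\mathbb{N}}$ of connected graphs such that $|V(G_n)|=n$ for all $n$, $R_2(G_n)=O(n\log n)$ and $R_3(G_n)=\Omega(n\log^2 n)$.
   Context: For a graph $G$ and integer $r\geqslant 2$, the $r$-colour Ramsey number $R_r(G)$ is the smallest integer $N$ such that every colouring of the edges of the complete graph $K_N$ with $r$ colours contains a copy of $G$ all of whose edges have the same colour. *)

theory Defs
  imports Complex_Main "HOL-Library.Landau_Symbols"
begin

definition simple_graph :: "nat \<Rightarrow> nat set set \<Rightarrow> bool" where
  "simple_graph n E \<longleftrightarrow> (\<forall>e\<in>E. e \<subseteq> {..<n} \<and> card e = 2)"

definition connected_graph :: "nat \<Rightarrow> nat set set \<Rightarrow> bool" where
  "connected_graph n E \<longleftrightarrow>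
     (\<forall>u<n. \<forall>v<n. (u, v) \<in> {(x, y). {x, y} \<in> E}\<^sup>*)"

definition has_mono_copy :: "nat \<Rightarrow> nat \<Rightarrow> (nat set \<Rightarrow> nat) \<Rightarrow> nat \<Rightarrow> nat set set \<Rightarrow> bool" where
  "has_mono_copy r N c n E \<longleftrightarrow>
     (\<exists>i<r. \<exists>f. inj_on f {..<n} \<and> f ` {..<n} \<subseteq> {..<N} \<and> (\<forall>e\<in>E. c (f ` e) = i))"

definition ramsey_number :: "nat \<Rightarrow> nat \<Rightarrow> nat set set \<Rightarrow> nat" where
  "ramsey_number r n E =
     (LEAST N. \<forall>c :: nat set \<Rightarrow> nat.
        (\<forall>e. e \<subseteq> {..<N} \<and> card e = 2 \<longrightarrow> c e < r) \<longrightarrow> has_mono_copy r N c n E)"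

end

(*
  The graphs are G_n = K_k with n - k pendant edges at one clique vertex, where k is about
  (ln n)/2, so that 4^k <= n.

  Two colours, N = 4^k + 2kn + 2n.  If 4^k vertices have degree at least n in both colours,
  the Erdos-Szekeres bound gives a monochromatic K_k among them, and any of its vertices has
  enough neighbours of that colour to carry the pendant edges.  Otherwise 2kn vertices have
  degree below n in some colour, hence kn of them in the same colour 1 - i.  Inside that set
  every vertex misses fewer than n edges of colour i, so a K_k of colour i can be picked
  greedily, and its vertices have colour-i degree at least N - n >= n.

  Three colours: cut (k-1)^2 (n-1) vertices into blocks of n - 1 vertices arranged in a
  (k-1) x (k-1) grid; colour edges inside a block 0, between different rows 1 and within a
  row 2.  A star on n vertices does not fit into a block, and colours 1 and 2 contain no K_k,
  so R_3(G_n) > (k-1)^2 (n-1), which is of order n (ln n)^2.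
*)
theory Submission
  imports Defs "HOL-Library.Ramsey"
begin

definition pendant_clique :: "nat \<Rightarrow> nat \<Rightarrow> nat set set" where
  "pendant_clique k n = {{0, j} | j. 0 < j \<and> j < n} \<union> {{a, b} | a b. a < b \<and> b < k}"

lemma simple_graph_pendant_clique: "k \<le> n \<Longrightarrow> simple_graph n (pendant_clique k n)"
  unfolding simple_graph_def pendant_clique_def by auto

lemma pendant_clique_edge:
  assumes "a < k" "b < k" "a \<noteq> b"
  shows "{a, b} \<in> pendant_clique k n"
proof (cases "a < b")
  case True
  then show ?thesis
    using assms(2) unfolding pendant_clique_def by blast
next
  case False
  then have "b < a" "{a, b} = {b, a}"
    using assms(3) by (simp_all add: insert_commute)
  then show ?thesis
    using assms(1) unfolding pendant_clique_def by blast
qed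

lemma connected_pendant_clique: "connected_graph n (pendant_clique k n)"
  unfolding connected_graph_def
proof (intro allI impI)
  let ?R = "{(x, y). {x, y} \<in> pendant_clique k n}"
  have "(0, x) \<in> ?R" "(x, 0) \<in> ?R" if "0 < x" "x < n" for x
    using that by (auto simp: pendant_clique_def insert_commute)
  then have "(0, x) \<in> ?R\<^sup>*" "(x, 0) \<in> ?R\<^sup>*" if "x < n" for x
    using that by (cases "x = 0"; auto)+
  then show "(u, v) \<in> ?R\<^sup>*" if "u < n" "v < n" for u v
    using that by (meson rtrancl_trans)
qed

definition colouring :: "nat \<Rightarrow> nat \<Rightarrow> (nat set \<Rightarrow> nat) \<Rightarrow> bool" where
  "colouring r N c \<longleftrightarrow> (\<forall>e. e \<subseteq> {..<N} \<and> card e = 2 \<longrightarrow> c e < r)"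

lemma colouring_doubleton: "colouring r N c \<Longrightarrow> x < N \<Longrightarrow> y < N \<Longrightarrow> x \<noteq> y \<Longrightarrow> c {x, y} < r"
  unfolding colouring_def by simp

definition arrows :: "nat \<Rightarrow> nat \<Rightarrow> nat \<Rightarrow> nat set set \<Rightarrow> bool" where
  "arrows r N n E \<longleftrightarrow> (\<forall>c. colouring r N c \<longrightarrow> has_mono_copy r N c n E)"

lemma ramsey_number_eq_Least: "ramsey_number r n E = (LEAST N. arrows r N n E)"
  unfolding ramsey_number_def arrows_def colouring_def ..

lemma ramsey_number_le: "arrows r N n E \<Longrightarrow> ramsey_number r n E \<le> N"
  unfolding ramsey_number_eq_Least by (rule Least_le)

lemma less_ramsey_number:
  assumes "\<exists>N. arrows r N n E" and "\<And>N. N \<le> B \<Longrightarrow> \<not> arrows r N n E"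
  shows "B < ramsey_number r n E"
  using LeastI_ex[OF assms(1)] assms(2) unfolding ramsey_number_eq_Least by (meson not_less)

lemma ex_arrows:
  assumes "simple_graph n E"
  shows "\<exists>N. arrows r N n E"
proof -
  obtain N :: nat where N: "partn_lst {..<N} (replicate r n) 2"
    using ramsey_full by blast
  have "has_mono_copy r N c n E" if "colouring r N c" for c
  proof -
    have "c \<in> nsets {..<N} 2 \<rightarrow> {..<r}"
      using that by (auto simp: colouring_def nsets_def)
    then obtain i H where i: "i < r" and "H \<in> nsets {..<N} (replicate r n ! i)"
      and hom: "c ` nsets H 2 \<subseteq> {i}"
      using partn_lstE[OF N] by (metis length_replicate)
    then have H: "H \<subseteq> {..<N}" "finite H" "card H = n"
      by (auto simp: nsets_def)
    then obtain h where h: "bij_betw h {..<n} H"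
      by (metis ex_bij_betw_nat_finite lessThan_atLeast0)
    have "c (h ` e) = i" if "e \<in> E" for e
    proof -
      have "e \<subseteq> {..<n}" "card e = 2"
        using assms that by (auto simp: simple_graph_def)
      then have "h ` e \<in> nsets H 2"
        using h by (auto simp: nsets_def bij_betw_def card_image inj_on_subset finite_subset)
      then show ?thesis
        using hom by blast
    qed
    with i h H(1) show ?thesis
      unfolding has_mono_copy_def bij_betw_def by blast
  qed
  then show ?thesis
    unfolding arrows_def by blast
qed

definition mono_clique :: "(nat set \<Rightarrow> nat) \<Rightarrow> nat \<Rightarrow> nat set \<Rightarrow> bool" where
  "mono_clique c i K \<longleftrightarrow> (\<forall>x\<in>K. \<forall>y\<in>K. x \<noteq> y \<longrightarrow> c {x, y} = i)"

definition colour_nbhd :: "nat \<Rightarrow> (nat set \<Rightarrow> nat) \<Rightarrow> nat \<Rightarrow> nat \<Rightarrow> nat set" where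
  "colour_nbhd N c i v = {w \<in> {..<N}. w \<noteq> v \<and> c {v, w} = i}"

lemma ex_enumeration_starting_at:
  fixes K W :: "'a :: linorder set"
  assumes "finite K" "finite W" "K \<inter> W = {}" "v \<in> K"
  shows "\<exists>f. bij_betw f {..<card K + card W} (K \<union> W) \<and> f 0 = v \<and> f ` {..<card K} = K"
proof -
  define xs where "xs = (v # sorted_list_of_set (K - {v})) @ sorted_list_of_set W"
  have "0 < card K"
    using assms(1,4) card_gt_0_iff by blast
  then have len: "length (v # sorted_list_of_set (K - {v})) = card K"
    using assms(1,4) by (simp add: card_Diff_singleton)
  show ?thesis
  proof (intro exI conjI)
    show "bij_betw (nth xs) {..<card K + card W} (K \<union> W)"
      using assms len by (intro bij_betw_nth) (auto simp: xs_def)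
    show "xs ! 0 = v"
      by (simp add: xs_def)
    have "take (card K) xs = v # sorted_list_of_set (K - {v})"
      unfolding xs_def by (metis append_eq_conv_conj len)
    then have "set (take (card K) xs) = K"
      using assms(1,4) by auto
    then show "nth xs ` {..<card K} = K"
      using len by (simp add: xs_def nth_image flip: atLeast0LessThan)
  qed
qed

lemma has_mono_copy_pendant_clique:
  assumes K: "K \<subseteq> {..<N}" "card K = k" "mono_clique c i K" and "v \<in> K"
    and deg: "n \<le> card (colour_nbhd N c i v)" and "i < r" "k \<le> n"
  shows "has_mono_copy r N c n (pendant_clique k n)"
proof -
  have "finite K"
    using K(1) finite_subset by blast
  have "n - k \<le> card (colour_nbhd N c i v - K)"
    using deg K(2) diff_card_le_card_Diff[OF \<open>finite K\<close>, of "colour_nbhd N c i v"] by linarith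
  then obtain W where W: "W \<subseteq> colour_nbhd N c i v - K" "card W = n - k" "finite W"
    by (rule obtain_subset_with_card_n)
  then obtain f where "bij_betw f {..<n} (K \<union> W)" "f 0 = v" and clique: "f ` {..<k} = K"
    using ex_enumeration_starting_at[OF \<open>finite K\<close> \<open>finite W\<close> _ \<open>v \<in> K\<close>] K(2) \<open>k \<le> n\<close> by auto
  then have inj: "inj_on f {..<n}" and img: "f ` {..<n} = K \<union> W"
    by (simp_all add: bij_betw_def)
  have "c (f ` e) = i" if "e \<in> pendant_clique k n" for e
    using that unfolding pendant_clique_def
  proof (elim UnE CollectE exE conjE)
    fix j assume e: "e = {0, j}" and j: "0 < j" "j < n"
    then have "f j \<noteq> v" "f j \<in> K \<union> W"
      using inj img \<open>f 0 = v\<close> by (auto dest: inj_onD)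
    then show ?thesis
      using e \<open>f 0 = v\<close> \<open>v \<in> K\<close> K(3) W(1) by (auto simp: mono_clique_def colour_nbhd_def)
  next
    fix a b assume e: "e = {a, b}" and ab: "a < b" "b < k"
    then have "f a \<noteq> f b" "f a \<in> K" "f b \<in> K"
      using inj clique \<open>k \<le> n\<close> by (auto dest: inj_onD)
    then show ?thesis
      using e K(3) by (simp add: mono_clique_def)
  qed
  moreover have "f ` {..<n} \<subseteq> {..<N}"
    unfolding img using K(1) W(1) by (auto simp: colour_nbhd_def)
  ultimately show ?thesis
    unfolding has_mono_copy_def using inj \<open>i < r\<close> by blast
qed

lemma ex_mono_clique_two_colours:
  assumes "finite S" "4 ^ k \<le> card S" and c: "\<forall>x\<in>S. \<forall>y\<in>S. x \<noteq> y \<longrightarrow> c {x, y} < 2"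
  shows "\<exists>K \<subseteq> S. \<exists>i<2. card K = k \<and> mono_clique c i K"
proof -
  define M where "M = ES 2 k k"
  have "M \<le> 4 ^ k"
    using binomial_le_pow2[of "k + k" k] by (simp add: M_def ES2_choose power_add flip: power_mult_distrib)
  then obtain v where v: "v ` {..<M} \<subseteq> S" "inj_on v {..<M}"
    using card_le_inj[of "{..<M}" S] assms(1,2) by auto
  define f where "f e = c (v ` e)" for e
  have "f e < 2" if e: "e \<in> nsets {..<M} 2" for e
  proof -
    obtain a b where "e = {a, b}" "a < M" "b < M" "a \<noteq> b"
      using e by (auto elim: nsets2_E)
    with v have "e = {a, b}" "v a \<in> S" "v b \<in> S" "v a \<noteq> v b"
      by (auto dest: inj_onD)
    with c show ?thesis
      by (simp add: f_def)
  qed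
  then have "f \<in> nsets {..<M} 2 \<rightarrow> {..<length [k, k]}"
    by (simp add: numeral_2_eq_2)
  then obtain i U where "i < length [k, k]" and U: "U \<in> nsets {..<M} ([k, k] ! i)"
    and hom: "f ` nsets U 2 \<subseteq> {i}"
    using partn_lstE[OF ramsey2_full[of 2 k k, folded M_def]] by blast
  then have i: "i < 2" and "[k, k] ! i = k"
    by (auto simp: less_Suc_eq)
  with U have U: "U \<subseteq> {..<M}" "card U = k"
    by (auto simp: nsets_def)
  have "mono_clique c i (v ` U)"
    unfolding mono_clique_def
  proof (intro ballI impI)
    fix x y assume "x \<in> v ` U" "y \<in> v ` U" "x \<noteq> y"
    then obtain a b where "a \<in> U" "b \<in> U" "a \<noteq> b" "x = v a" "y = v b"
      by blast
    then have "f {a, b} = i"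
      using hom by (simp add: image_subset_iff)
    then show "c {x, y} = i"
      by (simp add: f_def \<open>x = v a\<close> \<open>y = v b\<close>)
  qed
  moreover have "card (v ` U) = k"
    using U v(2) by (simp add: card_image inj_on_subset)
  moreover have "v ` U \<subseteq> S"
    using U(1) v(1) by blast
  ultimately show ?thesis
    using i by blast
qed

lemma mono_clique_insert: "mono_clique c i K \<Longrightarrow> \<forall>w\<in>K. c {v, w} = i \<Longrightarrow> mono_clique c i (insert v K)"
  unfolding mono_clique_def by (auto simp: insert_commute)

lemma ex_mono_clique_greedy:
  assumes "finite S" "k * n \<le> card S" "0 < n"
    and sparse: "\<forall>v\<in>S. card {w \<in> S. w \<noteq> v \<and> c {v, w} \<noteq> i} < n"
  shows "\<exists>K \<subseteq> S. card K = k \<and> mono_clique c i K"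
  using assms
proof (induction k arbitrary: S)
  case 0
  show ?case
    by (auto simp: mono_clique_def)
next
  case (Suc k)
  then obtain v where "v \<in> S"
    by fastforce
  define S' where "S' = {w \<in> S. w \<noteq> v \<and> c {v, w} = i}"
  define B where "B = {w \<in> S. w \<noteq> v \<and> c {v, w} \<noteq> i}"
  have "finite S'" "finite B"
    using Suc.prems(1) by (auto simp: S'_def B_def)
  have "S = insert v (S' \<union> B)" "v \<notin> S' \<union> B"
    using \<open>v \<in> S\<close> by (auto simp: S'_def B_def)
  then have "card S = Suc (card (S' \<union> B))"
    using \<open>finite S'\<close> \<open>finite B\<close> by simp
  also have "card (S' \<union> B) = card S' + card B"
    using \<open>finite S'\<close> \<open>finite B\<close> by (rule card_Un_disjoint) (auto simp: S'_def B_def)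
  finally have "card S = Suc (card S' + card B)" .
  moreover have "card B < n"
    using Suc.prems(4) \<open>v \<in> S\<close> by (simp add: B_def)
  ultimately have "k * n \<le> card S'"
    using Suc.prems(2) by simp
  moreover have "card {w \<in> S'. w \<noteq> u \<and> c {u, w} \<noteq> i} < n" if "u \<in> S'" for u
  proof -
    have "card {w \<in> S'. w \<noteq> u \<and> c {u, w} \<noteq> i} \<le> card {w \<in> S. w \<noteq> u \<and> c {u, w} \<noteq> i}"
      using Suc.prems(1) by (intro card_mono) (auto simp: S'_def)
    also have "\<dots> < n"
      using Suc.prems(4) that by (simp add: S'_def)
    finally show ?thesis .
  qed
  ultimately obtain K where K: "K \<subseteq> S'" "card K = k" "mono_clique c i K"
    using Suc.IH[OF \<open>finite S'\<close> _ Suc.prems(3)] by blast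
  have "v \<notin> K" "finite K"
    using K(1) \<open>finite S'\<close> finite_subset by (auto simp: S'_def)
  then have "card (insert v K) = Suc k"
    using K(2) by simp
  moreover have "mono_clique c i (insert v K)"
    using K(1,3) by (intro mono_clique_insert) (auto simp: S'_def)
  moreover have "insert v K \<subseteq> S"
    using K(1) \<open>v \<in> S\<close> by (auto simp: S'_def)
  ultimately show ?case
    by blast
qed

lemma card_colour_nbhd_two_colours:
  assumes c: "colouring 2 N c" and "v < N"
  shows "card (colour_nbhd N c 0 v) + card (colour_nbhd N c 1 v) = N - 1"
proof -
  have "card (colour_nbhd N c 0 v) + card (colour_nbhd N c 1 v)
      = card (colour_nbhd N c 0 v \<union> colour_nbhd N c 1 v)"
    by (rule card_Un_disjoint[symmetric]) (auto simp: colour_nbhd_def)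
  also have "colour_nbhd N c 0 v \<union> colour_nbhd N c 1 v = {..<N} - {v}"
    using colouring_doubleton[OF c] \<open>v < N\<close> by (fastforce simp: colour_nbhd_def less_2_cases_iff)
  finally show ?thesis
    using \<open>v < N\<close> by simp
qed

lemma has_mono_copy_if_many_rich_vertices:
  assumes c: "colouring 2 N c" and "0 < k" "k \<le> n"
    and rich: "4 ^ k \<le> card {v \<in> {..<N}. \<forall>i<2. n \<le> card (colour_nbhd N c i v)}"
  shows "has_mono_copy 2 N c n (pendant_clique k n)"
proof -
  define R where "R = {v \<in> {..<N}. \<forall>i<2. n \<le> card (colour_nbhd N c i v)}"
  have "finite R" "R \<subseteq> {..<N}"
    by (auto simp: R_def)
  then have "\<forall>x\<in>R. \<forall>y\<in>R. x \<noteq> y \<longrightarrow> c {x, y} < 2"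
    using colouring_doubleton[OF c] by blast
  then obtain K i where K: "K \<subseteq> R" "i < 2" "card K = k" "mono_clique c i K"
    using ex_mono_clique_two_colours[OF \<open>finite R\<close> rich[folded R_def]] by blast
  obtain v where "v \<in> K"
    using K(3) \<open>0 < k\<close> by fastforce
  with K(1,2) have "K \<subseteq> {..<N}" "n \<le> card (colour_nbhd N c i v)"
    by (auto simp: R_def)
  with K \<open>v \<in> K\<close> \<open>k \<le> n\<close> show ?thesis
    by (intro has_mono_copy_pendant_clique[of K N k c i v])
qed

lemma has_mono_copy_if_many_poor_vertices:
  assumes c: "colouring 2 N c" and "0 < k" "k \<le> n" "2 * n \<le> N" "i < 2"
    and poor: "k * n \<le> card {v \<in> {..<N}. card (colour_nbhd N c (1 - i) v) < n}"
  shows "has_mono_copy 2 N c n (pendant_clique k n)"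
proof -
  define P where "P = {v \<in> {..<N}. card (colour_nbhd N c (1 - i) v) < n}"
  have sparse: "\<forall>v\<in>P. card {w \<in> P. w \<noteq> v \<and> c {v, w} \<noteq> i} < n"
  proof
    fix v assume "v \<in> P"
    have "{w \<in> P. w \<noteq> v \<and> c {v, w} \<noteq> i} \<subseteq> colour_nbhd N c (1 - i) v"
    proof
      fix w assume w: "w \<in> {w \<in> P. w \<noteq> v \<and> c {v, w} \<noteq> i}"
      then have "c {v, w} < 2"
        using colouring_doubleton[OF c] \<open>v \<in> P\<close> by (simp add: P_def)
      with w \<open>i < 2\<close> show "w \<in> colour_nbhd N c (1 - i) v"
        by (auto simp: P_def colour_nbhd_def)
    qed
    then have "card {w \<in> P. w \<noteq> v \<and> c {v, w} \<noteq> i} \<le> card (colour_nbhd N c (1 - i) v)"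
      by (intro card_mono) (simp add: colour_nbhd_def)
    also have "\<dots> < n"
      using \<open>v \<in> P\<close> by (simp add: P_def)
    finally show "card {w \<in> P. w \<noteq> v \<and> c {v, w} \<noteq> i} < n" .
  qed
  have "finite P" "0 < n"
    using \<open>0 < k\<close> \<open>k \<le> n\<close> by (simp_all add: P_def)
  then obtain K where K: "K \<subseteq> P" "card K = k" "mono_clique c i K"
    using ex_mono_clique_greedy[OF _ poor[folded P_def] _ sparse] by blast
  obtain v where "v \<in> K"
    using K(2) \<open>0 < k\<close> by fastforce
  then have "v < N" "card (colour_nbhd N c (1 - i) v) < n"
    using K(1) by (auto simp: P_def)
  then have "n \<le> card (colour_nbhd N c i v)"
    using card_colour_nbhd_two_colours[OF c] \<open>2 * n \<le> N\<close> \<open>i < 2\<close>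
    by (fastforce simp: less_2_cases_iff)
  with K \<open>v \<in> K\<close> \<open>k \<le> n\<close> \<open>i < 2\<close> show ?thesis
    by (intro has_mono_copy_pendant_clique[of K N k c i v]) (auto simp: P_def)
qed

lemma arrows_2_pendant_clique:
  assumes "0 < k" "k \<le> n" and N: "4 ^ k + 2 * (k * n) + 2 * n \<le> N"
  shows "arrows 2 N n (pendant_clique k n)"
  unfolding arrows_def
proof (intro allI impI)
  fix c assume c: "colouring 2 N c"
  define R where "R = {v \<in> {..<N}. \<forall>i<2. n \<le> card (colour_nbhd N c i v)}"
  define P where "P i = {v \<in> {..<N}. card (colour_nbhd N c (1 - i) v) < n}" for i
  show "has_mono_copy 2 N c n (pendant_clique k n)"
  proof (cases "4 ^ k \<le> card R")
    case True
    then show ?thesis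
      using has_mono_copy_if_many_rich_vertices[OF c assms(1,2)] by (simp add: R_def)
  next
    case False
    have "{..<N} - R \<subseteq> P 0 \<union> P 1"
      by (auto simp: R_def P_def less_2_cases_iff)
    then have "card ({..<N} - R) \<le> card (P 0 \<union> P 1)"
      by (intro card_mono) (auto simp: P_def)
    also have "\<dots> \<le> card (P 0) + card (P 1)"
      by (rule card_Un_le)
    moreover have "card ({..<N} - R) = N - card R"
      by (subst card_Diff_subset) (auto simp: R_def)
    ultimately have "N - card R \<le> card (P 0) + card (P 1)"
      by simp
    then have "k * n \<le> card (P 0) \<or> k * n \<le> card (P 1)"
      using False N by linarith
    then obtain i where "i < 2" "k * n \<le> card (P i)"
      by (elim disjE) (auto intro!: that)
    then show ?thesis
      using has_mono_copy_if_many_poor_vertices[OF c assms(1,2)] N by (simp add: P_def)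
  qed
qed

lemma mono_copy_pendant_clique_parts:
  assumes "\<forall>e\<in>pendant_clique k n. c (f ` e) = i"
  shows "mono_clique c i (f ` {..<k})" and "\<forall>y\<in>f ` {..<n} - {f 0}. c {f 0, y} = i"
proof -
  show "mono_clique c i (f ` {..<k})"
    unfolding mono_clique_def
  proof (intro ballI impI)
    fix x y assume "x \<in> f ` {..<k}" "y \<in> f ` {..<k}" "x \<noteq> y"
    then obtain a b where "a < k" "b < k" "x = f a" "y = f b"
      by blast
    with \<open>x \<noteq> y\<close> have "a \<noteq> b"
      by blast
    then have "c (f ` {a, b}) = i"
      using \<open>a < k\<close> \<open>b < k\<close> assms pendant_clique_edge[of a k b n] by blast
    then show "c {x, y} = i"
      by (simp add: \<open>x = f a\<close> \<open>y = f b\<close>)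
  qed
  show "\<forall>y\<in>f ` {..<n} - {f 0}. c {f 0, y} = i"
  proof
    fix y assume y: "y \<in> f ` {..<n} - {f 0}"
    then obtain j where "j < n" "y = f j"
      by blast
    moreover from y \<open>y = f j\<close> have "0 < j"
      by (cases j) auto
    ultimately have "{0, j} \<in> pendant_clique k n"
      by (auto simp: pendant_clique_def)
    then have "c (f ` {0, j}) = i"
      using assms by blast
    then show "c {f 0, y} = i"
      by (simp add: \<open>y = f j\<close>)
  qed
qed

(* Block b = x div m of m consecutive vertices sits in row b div q, column b mod q. *)
definition grid_colour :: "nat \<Rightarrow> nat \<Rightarrow> nat \<Rightarrow> nat \<Rightarrow> nat" where
  "grid_colour m q x y =
     (if x div m = y div m then 0 else if x div m div q \<noteq> y div m div q then 1 else 2)"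

definition grid_colouring :: "nat \<Rightarrow> nat \<Rightarrow> nat set \<Rightarrow> nat" where
  "grid_colouring m q e = grid_colour m q (Min e) (Max e)"

lemma grid_colouring_doubleton: "grid_colouring m q {x, y} = grid_colour m q x y"
  by (cases "x \<le> y") (auto simp: grid_colouring_def grid_colour_def max_def min_def)

lemma colouring_grid_colouring: "colouring 3 N (grid_colouring m q)"
  by (simp add: colouring_def grid_colouring_def grid_colour_def)

lemma card_le_if_grid_colour_0:
  assumes "0 < m" "\<forall>y\<in>A - {x}. grid_colour m q x y = 0"
  shows "card A \<le> m"
proof -
  define b where "b = x div m"
  have "A \<subseteq> {b * m..<b * m + m}"
  proof
    fix y assume "y \<in> A"
    have "y div m = b"
    proof (cases "y = x")
      case False
      then have "grid_colour m q x y = 0"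
        using assms(2) \<open>y \<in> A\<close> by blast
      then show ?thesis
        by (simp add: grid_colour_def b_def split: if_splits)
    qed (simp add: b_def)
    then have "y = b * m + y mod m"
      by (metis div_mult_mod_eq)
    then show "y \<in> {b * m..<b * m + m}"
      using \<open>0 < m\<close> by (metis atLeastLessThan_iff le_add1 mod_less_divisor nat_add_left_cancel_less)
  qed
  then show ?thesis
    using card_mono[of "{b * m..<b * m + m}" A] by simp
qed

lemma card_le_if_mono_clique_grid_1:
  assumes "A \<subseteq> {..<q * q * m}" "mono_clique (grid_colouring m q) 1 A"
  shows "card A \<le> q"
proof -
  let ?row = "\<lambda>x. x div m div q"
  have "inj_on ?row A"
  proof (rule inj_onI, rule ccontr)
    fix x y assume "x \<in> A" "y \<in> A" "?row x = ?row y" "x \<noteq> y"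
    then have "grid_colour m q x y = 1"
      using assms(2) by (metis mono_clique_def grid_colouring_doubleton)
    with \<open>?row x = ?row y\<close> show False
      by (simp add: grid_colour_def split: if_splits)
  qed
  moreover have "?row ` A \<subseteq> {..<q}"
    using assms(1) by (auto intro!: less_mult_imp_div_less)
  ultimately show ?thesis
    using card_inj_on_le[of ?row A "{..<q}"] by simp
qed

lemma card_le_if_mono_clique_grid_2:
  assumes "0 < q" "mono_clique (grid_colouring m q) 2 A"
  shows "card A \<le> q"
proof -
  let ?column = "\<lambda>x. x div m mod q"
  have "inj_on ?column A"
  proof (rule inj_onI, rule ccontr)
    fix x y assume "x \<in> A" "y \<in> A" "?column x = ?column y" "x \<noteq> y"
    then have "grid_colour m q x y = 2"
      using assms(2) by (metis mono_clique_def grid_colouring_doubleton)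
    then have "x div m \<noteq> y div m" "x div m div q = y div m div q"
      by (simp_all add: grid_colour_def split: if_splits)
    with \<open>?column x = ?column y\<close> show False
      by (metis div_mult_mod_eq)
  qed
  moreover have "?column ` A \<subseteq> {..<q}"
    using \<open>0 < q\<close> by auto
  ultimately show ?thesis
    using card_inj_on_le[of ?column A "{..<q}"] by simp
qed

lemma not_has_mono_copy_grid_colouring:
  assumes "0 < q" "q \<le> m" "N \<le> q * q * m"
  shows "\<not> has_mono_copy 3 N (grid_colouring m q) (Suc m) (pendant_clique (Suc q) (Suc m))"
proof
  assume "has_mono_copy 3 N (grid_colouring m q) (Suc m) (pendant_clique (Suc q) (Suc m))"
  then obtain i f where "i < 3" and f: "inj_on f {..<Suc m}" "f ` {..<Suc m} \<subseteq> {..<N}"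
    and mono: "\<forall>e\<in>pendant_clique (Suc q) (Suc m). grid_colouring m q (f ` e) = i"
    unfolding has_mono_copy_def by blast
  let ?K = "f ` {..<Suc q}"
  have "{..<Suc q} \<subseteq> {..<Suc m}" "{..<N} \<subseteq> {..<q * q * m}"
    using \<open>q \<le> m\<close> \<open>N \<le> q * q * m\<close> by auto
  then have "?K \<subseteq> {..<q * q * m}"
    using f(2) by (meson image_mono subset_trans)
  have "card (f ` {..<Suc m}) = Suc m"
    using f(1) by (simp add: card_image)
  have "card ?K = Suc q"
    using inj_on_subset[OF f(1) \<open>{..<Suc q} \<subseteq> {..<Suc m}\<close>] by (simp add: card_image)
  note clique = mono_copy_pendant_clique_parts(1)[OF mono]
  consider "i = 0" | "i = 1" | "i = 2"
    using \<open>i < 3\<close> by linarith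
  then show False
  proof cases
    case 1
    then have "\<forall>y\<in>f ` {..<Suc m} - {f 0}. grid_colour m q (f 0) y = 0"
      using mono_copy_pendant_clique_parts(2)[OF mono] by (simp only: grid_colouring_doubleton)
    then have "card (f ` {..<Suc m}) \<le> m"
      using \<open>0 < q\<close> \<open>q \<le> m\<close> by (intro card_le_if_grid_colour_0) auto
    then show False
      using \<open>card (f ` {..<Suc m}) = Suc m\<close> by simp
  next
    case 2
    then have "card ?K \<le> q"
      using clique by (intro card_le_if_mono_clique_grid_1[OF \<open>?K \<subseteq> {..<q * q * m}\<close>]) simp
    then show False
      using \<open>card ?K = Suc q\<close> by simp
  next
    case 3
    then have "card ?K \<le> q"
      using clique by (intro card_le_if_mono_clique_grid_2[OF \<open>0 < q\<close>]) simp
    then show False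
      using \<open>card ?K = Suc q\<close> by simp
  qed
qed

lemma ramsey_number_3_pendant_clique_gt:
  assumes "2 \<le> k" "k \<le> n"
  shows "(k - 1)\<^sup>2 * (n - 1) < ramsey_number 3 n (pendant_clique k n)"
proof -
  define q m where "q = k - 1" and "m = n - 1"
  have qm: "k = Suc q" "n = Suc m" "0 < q" "q \<le> m"
    using assms by (auto simp: q_def m_def)
  show ?thesis
  proof (rule less_ramsey_number)
    show "\<exists>N. arrows 3 N n (pendant_clique k n)"
      using ex_arrows simple_graph_pendant_clique[OF \<open>k \<le> n\<close>] by blast
    fix N assume "N \<le> (k - 1)\<^sup>2 * (n - 1)"
    then have "\<not> has_mono_copy 3 N (grid_colouring m q) n (pendant_clique k n)"
      using not_has_mono_copy_grid_colouring[of q m N] qm by (simp add: power2_eq_square)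
    then show "\<not> arrows 3 N n (pendant_clique k n)"
      using colouring_grid_colouring unfolding arrows_def by blast
  qed
qed

lemma ramsey_number_2_pendant_clique_le:
  assumes "0 < k" "k \<le> n"
  shows "ramsey_number 2 n (pendant_clique k n) \<le> 4 ^ k + 2 * (k * n) + 2 * n"
  using assms by (intro ramsey_number_le arrows_2_pendant_clique) auto

(* The largest k with 2 k <= ln n; then 4^k <= n keeps the Erdos-Szekeres term linear. *)
definition clique_order :: "nat \<Rightarrow> nat" where
  "clique_order n = nat \<lfloor>ln (real n) / 2\<rfloor>"

lemma clique_order_le: "clique_order n \<le> n"
proof (cases "n = 0")
  case False
  then have "ln (real n) / 2 \<le> real n"
    using ln_le_minus_one[of "real n"] by simp
  then show ?thesis
    unfolding clique_order_def by linarith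
qed (simp add: clique_order_def)

lemma clique_order_bounds:
  assumes "1 \<le> n"
  shows "2 * real (clique_order n) \<le> ln (real n)" "ln (real n) < 2 * real (clique_order n) + 2"
proof -
  have "0 \<le> ln (real n)"
    using assms by simp
  then have "real (clique_order n) = of_int \<lfloor>ln (real n) / 2\<rfloor>"
    by (simp add: clique_order_def)
  then show "2 * real (clique_order n) \<le> ln (real n)" "ln (real n) < 2 * real (clique_order n) + 2"
    by linarith+
qed

lemma four_pow_clique_order_le:
  assumes "1 \<le> n"
  shows "4 ^ clique_order n \<le> n"
proof -
  have "ln 4 = 2 * ln (2 :: real)"
    using ln_realpow[of 2 2] by simp
  then have "real (clique_order n) * ln 4 \<le> real (clique_order n) * 2"
    using ln_2_less_1 by (intro mult_left_mono) auto
  then have "real (clique_order n) * ln 4 \<le> ln (real n)"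
    using clique_order_bounds(1)[OF assms] by linarith
  then have "exp (real (clique_order n) * ln 4) \<le> real n"
    using assms by (metis exp_le_cancel_iff exp_ln of_nat_0_less_iff less_le_trans zero_less_one)
  then show ?thesis
    by (simp add: exp_of_nat_mult)
qed

lemma two_le_if_ln_pos:
  assumes "0 < ln (real n)"
  shows "2 \<le> n"
proof (rule ccontr)
  assume "\<not> 2 \<le> n"
  then have "n = 0 \<or> n = 1"
    by auto
  then show False
    using assms by auto
qed

lemma ramsey_number_2_le_n_ln:
  assumes "2 \<le> ln (real n)"
  shows "real (ramsey_number 2 n (pendant_clique (clique_order n) n)) \<le> 4 * (real n * ln (real n))"
proof -
  let ?k = "clique_order n"
  have "1 \<le> n"
    using two_le_if_ln_pos[of n] assms by simp
  then have "0 < ?k"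
    using clique_order_bounds(2)[of n] assms by simp
  have "real (ramsey_number 2 n (pendant_clique ?k n)) \<le> real (4 ^ ?k + 2 * (?k * n) + 2 * n)"
    using ramsey_number_2_pendant_clique_le[OF \<open>0 < ?k\<close> clique_order_le] by (rule of_nat_mono)
  also have "\<dots> = real (4 ^ ?k) + 2 * real ?k * real n + 2 * real n"
    by simp
  also have "\<dots> \<le> real n + ln (real n) * real n + 2 * real n"
    using four_pow_clique_order_le[OF \<open>1 \<le> n\<close>] clique_order_bounds(1)[OF \<open>1 \<le> n\<close>]
    by (intro add_mono mult_right_mono) auto
  also have "\<dots> \<le> 4 * (real n * ln (real n))"
    using assms mult_left_mono[of 1 "ln (real n)" "real n"] by (simp add: algebra_simps)
  finally show ?thesis .
qed

lemma ramsey_number_3_ge_n_ln_sq: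
  assumes "8 \<le> ln (real n)"
  shows "real n * (ln (real n))\<^sup>2 / 32 \<le> real (ramsey_number 3 n (pendant_clique (clique_order n) n))"
proof -
  let ?k = "clique_order n"
  let ?L = "ln (real n)"
  have "2 \<le> n"
    using two_le_if_ln_pos[of n] assms by simp
  then have "?L / 4 \<le> real ?k - 1"
    using clique_order_bounds(2)[of n] assms by simp
  then have "2 \<le> ?k"
    using assms by simp
  have "real n * ?L\<^sup>2 / 32 = (?L / 4)\<^sup>2 * (real n / 2)"
    by (simp add: power2_eq_square)
  also have "\<dots> \<le> (real ?k - 1)\<^sup>2 * real (n - 1)"
    using \<open>?L / 4 \<le> real ?k - 1\<close> \<open>2 \<le> n\<close> assms by (intro mult_mono power_mono) auto
  also have "\<dots> = real ((?k - 1)\<^sup>2 * (n - 1))"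
    using \<open>2 \<le> ?k\<close> by (simp add: of_nat_diff)
  also have "\<dots> < real (ramsey_number 3 n (pendant_clique ?k n))"
    using ramsey_number_3_pendant_clique_gt[OF \<open>2 \<le> ?k\<close> clique_order_le] by (simp only: of_nat_less_iff)
  finally show ?thesis
    by simp
qed

theorem theorem1p4:
  shows "\<exists>G :: nat \<Rightarrow> nat set set.
    (\<forall>n. simple_graph n (G n) \<and> connected_graph n (G n)) \<and>
    (\<lambda>n. real (ramsey_number 2 n (G n))) \<in> O(\<lambda>n. real n * ln (real n)) \<and>
    (\<lambda>n. real (ramsey_number 3 n (G n))) \<in> \<Omega>(\<lambda>n. real n * (ln (real n))^2)"
proof (intro exI conjI allI)
  let ?G = "\<lambda>n. pendant_clique (clique_order n) n"
  show "simple_graph n (?G n)" "connected_graph n (?G n)" for n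
    by (simp_all add: simple_graph_pendant_clique clique_order_le connected_pendant_clique)
  have large: "\<forall>\<^sub>F n in at_top. 8 \<le> ln (real n)"
    using filterlim_compose[OF ln_at_top filterlim_real_sequentially] by (simp add: filterlim_at_top)
  show "(\<lambda>n. real (ramsey_number 2 n (?G n))) \<in> O(\<lambda>n. real n * ln (real n))"
    using large by (intro bigoI[where c = 4]) (auto elim!: eventually_mono intro!: ramsey_number_2_le_n_ln)
  show "(\<lambda>n. real (ramsey_number 3 n (?G n))) \<in> \<Omega>(\<lambda>n. real n * (ln (real n))^2)"
    using large by (intro landau_omega.bigI[where c = "1 / 32"])
      (auto elim!: eventually_mono dest!: ramsey_number_3_ge_n_ln_sq)
qed

end
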